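(* Let $\Omega\subset\mathbb{R}^d$ be a domain of finite measure. For $\Theta=(a,b)\in\mathbb{R}^d\times\mathbb{R}$ define $f_\Theta:\Omega\to\mathbb{R}$ by $f_\Theta(x):=H(a\cdot x+b)$, where $H$ is the Heaviside function. Then: 1. for any $\Theta_0=(a_0,b_0)$ with $a_0\ne0$ and any sequence $\{\Theta_n\}_{n\in\mathbb{N}}=\{(a_n,b_n)\}$ converging to $\Theta_0$, $f_{\Theta_n}\to f_{\Theta_0}$ almost everywhere in $\Omega$; 2. if in addition $\Omega$ is bounded, then for any degenerate parameter $\Theta_0=(0,b_0)$ there exists a non-degenerate $\Theta'=(a',b')$ (i.e. $a'\ne0$) such that $f_{\Theta_0}\equiv f_{\Theta'}$ in $\Omega$.
   Context: The Heaviside function is $H(t)=1$ for $t\ge0$ and $H(t)=0$ for $t<0$. *)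

theory Defs
  imports "HOL-Analysis.Analysis"
begin

definition heaviside :: "real \<Rightarrow> real" where
  "heaviside t = (if t \<ge> 0 then 1 else 0)"

definition fTheta :: "real^'d \<Rightarrow> real \<Rightarrow> real^'d \<Rightarrow> real" where
  "fTheta a b x = heaviside (a \<bullet> x + b)"

end

theory Submission
  imports Defs
begin

text \<open>
  For a0 \<noteq> 0 the parameters (a n, b n) move the value a n \<bullet> x + b n continuously, and the
  Heaviside function is continuous away from 0; so convergence can fail only on the hyperplane
  a0 \<bullet> x + b0 = 0, which is Lebesgue-null. A degenerate parameter gives a constant function,
  and on a bounded set any hyperplane placed far enough away reproduces that constant.
\<close>

lemma heaviside_tendsto:
  assumes "(g \<longlongrightarrow> t) F" "t \<noteq> 0"
  shows "((\<lambda>n. heaviside (g n)) \<longlongrightarrow> heaviside t) F"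
proof (rule tendsto_eventually)
  have "eventually (\<lambda>n. (g n \<ge> 0) = (t \<ge> 0)) F"
  proof (cases "t > 0")
    case True
    show ?thesis
      using order_tendstoD(1)[OF assms(1) True] by (rule eventually_mono) (use True in auto)
  next
    case False
    with assms(2) have "t < 0" by simp
    show ?thesis
      using order_tendstoD(2)[OF assms(1) \<open>t < 0\<close>] by (rule eventually_mono) (use \<open>t < 0\<close> in auto)
  qed
  then show "eventually (\<lambda>n. heaviside (g n) = heaviside t) F"
    by eventually_elim (simp add: heaviside_def)
qed

lemma heaviside_add_dominated:
  assumes "\<bar>s\<bar> < \<bar>c\<bar>"
  shows "heaviside (s + c) = heaviside c"
  using assms by (auto simp: heaviside_def)

lemma fTheta_tendsto:
  assumes "(\<lambda>n. (a n, b n)) \<longlonglongrightarrow> (a0, b0)" "a0 \<bullet> x + b0 \<noteq> 0"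
  shows "(\<lambda>n. fTheta (a n) (b n) x) \<longlonglongrightarrow> fTheta a0 b0 x"
proof -
  have "a \<longlonglongrightarrow> a0" "b \<longlonglongrightarrow> b0"
    using tendsto_fst[OF assms(1)] tendsto_snd[OF assms(1)] by simp_all
  then have "(\<lambda>n. a n \<bullet> x + b n) \<longlonglongrightarrow> a0 \<bullet> x + b0"
    by (intro tendsto_intros)
  then show ?thesis
    unfolding fTheta_def using assms(2) by (rule heaviside_tendsto)
qed

lemma AE_fTheta_tendsto:
  fixes a0 :: "real^'n"
  assumes "a0 \<noteq> 0" "(\<lambda>n. (a n, b n)) \<longlonglongrightarrow> (a0, b0)"
  shows "AE x in lebesgue. (\<lambda>n. fTheta (a n) (b n) x) \<longlonglongrightarrow> fTheta a0 b0 x"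
proof -
  have "negligible {x. a0 \<bullet> x = - b0}"
    using assms(1) by (simp add: negligible_hyperplane)
  then have "AE x in lebesgue. x \<notin> {x. a0 \<bullet> x = - b0}"
    by (intro AE_not_in) (simp add: negligible_iff_null_sets)
  then show ?thesis
    by eventually_elim (auto intro: fTheta_tendsto[OF assms(2)])
qed

lemma fTheta_degenerate_eq_on_bounded:
  fixes S :: "(real^'n) set"
  assumes "bounded S"
  obtains a' b' where "a' \<noteq> 0" "\<forall>x\<in>S. fTheta 0 b0 x = fTheta a' b' x"
proof -
  obtain r where r: "\<And>x. x \<in> S \<Longrightarrow> norm x \<le> r"
    using assms bounded_iff by blast
  obtain e :: "real^'n" where e: "norm e = 1"
    using vector_choose_size zero_le_one by blast
  define b' where "b' = (if b0 \<ge> 0 then r + 1 else - (r + 1))"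
  have "fTheta e b' x = fTheta 0 b0 x" if "x \<in> S" for x
  proof -
    have "\<bar>e \<bullet> x\<bar> \<le> r"
      using Cauchy_Schwarz_ineq2[of e x] e r[OF that] by simp
    then have "\<bar>e \<bullet> x\<bar> < \<bar>b'\<bar>"
      by (simp add: b'_def)
    then have "fTheta e b' x = heaviside b'"
      unfolding fTheta_def by (rule heaviside_add_dominated)
    also have "\<dots> = fTheta 0 b0 x"
      using \<open>\<bar>e \<bullet> x\<bar> \<le> r\<close> by (simp add: fTheta_def heaviside_def b'_def)
    finally show ?thesis .
  qed
  moreover have "e \<noteq> 0"
    using e by auto
  ultimately show ?thesis
    using that by metis
qed

theorem mainTheorem15:
  fixes \<Omega> :: "(real^'d) set"
  assumes domain: "open \<Omega>" "connected \<Omega>" "\<Omega> \<noteq> {}"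
    and finite_measure: "emeasure lebesgue \<Omega> < \<infinity>"
  shows "(\<forall>(a0::real^'d) (b0::real) (a::nat \<Rightarrow> real^'d) (b::nat \<Rightarrow> real).
            a0 \<noteq> 0 \<longrightarrow> (\<lambda>n. (a n, b n)) \<longlonglongrightarrow> (a0, b0) \<longrightarrow>
            (AE x in lebesgue. x \<in> \<Omega> \<longrightarrow> (\<lambda>n. fTheta (a n) (b n) x) \<longlonglongrightarrow> fTheta a0 b0 x))
       \<and> (bounded \<Omega> \<longrightarrow>
            (\<forall>b0::real. \<exists>(a'::real^'d) (b'::real). a' \<noteq> 0 \<and>
               (\<forall>x\<in>\<Omega>. fTheta 0 b0 x = fTheta a' b' x)))"
proof (intro conjI allI impI)
  fix a0 :: "real^'d" and b0 :: real and a :: "nat \<Rightarrow> real^'d" and b :: "nat \<Rightarrow> real"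
  assume "a0 \<noteq> 0" "(\<lambda>n. (a n, b n)) \<longlonglongrightarrow> (a0, b0)"
  from AE_fTheta_tendsto[OF this]
  show "AE x in lebesgue. x \<in> \<Omega> \<longrightarrow> (\<lambda>n. fTheta (a n) (b n) x) \<longlonglongrightarrow> fTheta a0 b0 x"
    by (rule eventually_mono) simp
next
  fix b0 :: real
  assume "bounded \<Omega>"
  then show "\<exists>(a'::real^'d) (b'::real). a' \<noteq> 0 \<and> (\<forall>x\<in>\<Omega>. fTheta 0 b0 x = fTheta a' b' x)"
    by (rule fTheta_degenerate_eq_on_bounded) blast
qed

end
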